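(* Let $(\mathcal D,\mathcal R)$ be a CLKID$^\omega_N$ pre-proof tree whose root is labelled by the sequent $S$. Normalising it yields a pre-proof tree-set $(\mathcal{MD},\mathcal{MR})$ with the following two properties. (1) $(\mathcal{MD},\mathcal{MR})$ contains a tree whose root is labelled by $S$. (2) In every rb-path $[R,\dots,H,B]$ of $(\mathcal{MD},\mathcal{MR})$, the bud $B$ is the only node labelled by the premise of a $(Subst)$ step. Moreover, a node of such an rb-path is a $(Subst)$-node if and only if it is the IH-node $H$.
   Context: Rules. CLKID$^\omega_N$ is a sequent calculus for first-order logic with inductive definitions. Among its rules, $(Subst)$ infers $\Gamma[\theta]\vdash\Delta[\theta]$ from $\Gamma\vdash\Delta$ for a substitution $\theta$. A $(Subst)$-node is a node whose sequent is the conclusion of a $(Subst)$ step. Pre-proofs. A pre-proof tree $(\mathcal D,\mathcal R)$ is a finite derivation tree. Each terminal node is either a leaf (the conclusion of a 0-premise rule) or a bud, and $\mathcal R$ assigns to each bud a companion node labelled by the same sequent. A pre-proof tree-set $(\mathcal{MD},\mathcal{MR})$ is a finite set of such trees in which companions may lie in any tree. $S(N)$ denotes the label of node $N$. Paths. A path is a list of nodes in which each next node is either labelled by a premise of the rule applied at the current internal node (its child), or is the companion of the current node when that node is a bud. An rb-path is a path $[R,\dots,H,B]$ from the root $R$ of a tree to a bud $B$ of the same tree that contains no other bud; $H$ is called the IH-node. Normalisation. It is the exhaustive application of the following operations. (O1) For an internal non-bud node $N$ labelled by the premise of a $(Subst)$ step: the subtree rooted at $N$ is detached to form a new tree rooted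 at a copy of $N$, and $N$'s original position becomes a bud whose companion is that new root. (O2) For a non-root companion $C$: the subtree rooted at $C$ is detached to form a new tree with root $C^*$ labelled $S(C)$, which becomes the companion of the buds formerly pointing to $C$. At $C$'s original position, a node labelled $S(C)$ becomes the conclusion of a $(Subst)$ step with the empty substitution, whose premise is a new bud with companion $C^*$. (O3) For a bud $B$ whose sequent is the premise of a rule other than $(Subst)$: apply $(Subst)$ with the empty substitution to $S(B)$, and the node labelled by its premise becomes the new bud, with the same companion. *)

theory Defs
  imports Main
begin

(* The theorem is purely structural.  The calculus is kept abstract:
     'q  : sequents
     'r  : names of the rules other than (Subst)
     's  : substitutions
     sapp th S : the sequent S[th]
     valid r Ps C : "C follows from premises Ps by rule r" (non-Subst rules)
     eps : the empty substitution
   A pre-proof tree-set is a finite graph of nodes (natural numbers) with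
   root set, labels, the rule applied at each node (None for buds), the
   ordered list of children (premises) and the companion of each bud.
   ------------------------------------------------------------------------ *)

datatype ('r, 's) rstep = Rule 'r | Subst 's

record ('q, 'r, 's) ptset =
  nodes :: "nat set"
  roots :: "nat set"
  lab   :: "nat \<Rightarrow> 'q"
  app   :: "nat \<Rightarrow> ('r, 's) rstep option"
  kids  :: "nat \<Rightarrow> nat list"
  comp  :: "nat \<Rightarrow> nat option"

definition edges :: "('q, 'r, 's) ptset \<Rightarrow> (nat \<times> nat) set" where
  "edges T = {(p, c). p \<in> nodes T \<and> c \<in> set (kids T p)}"

definition is_bud :: "('q, 'r, 's) ptset \<Rightarrow> nat \<Rightarrow> bool" where
  "is_bud T n \<longleftrightarrow> n \<in> nodes T \<and> comp T n \<noteq> None"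

definition subst_premise :: "('q, 'r, 's) ptset \<Rightarrow> nat \<Rightarrow> bool" where
  "subst_premise T n \<longleftrightarrow>
     (\<exists>p \<in> nodes T. \<exists>th. app T p = Some (Subst th) \<and> n \<in> set (kids T p))"

definition subst_node :: "('q, 'r, 's) ptset \<Rightarrow> nat \<Rightarrow> bool" where
  "subst_node T n \<longleftrightarrow> n \<in> nodes T \<and> (\<exists>th. app T n = Some (Subst th))"

definition preproof ::
  "('s \<Rightarrow> 'q \<Rightarrow> 'q) \<Rightarrow> ('r \<Rightarrow> 'q list \<Rightarrow> 'q \<Rightarrow> bool) \<Rightarrow> ('q, 'r, 's) ptset \<Rightarrow> bool" where
  "preproof sapp valid T \<longleftrightarrow>
     finite (nodes T) \<and> roots T \<subseteq> nodes T \<and> roots T \<noteq> {} \<and>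
     (\<forall>n \<in> nodes T. set (kids T n) \<subseteq> nodes T \<and> distinct (kids T n)) \<and>
     (\<forall>p1 \<in> nodes T. \<forall>p2 \<in> nodes T. \<forall>c.
        c \<in> set (kids T p1) \<longrightarrow> c \<in> set (kids T p2) \<longrightarrow> p1 = p2) \<and>
     (\<forall>r \<in> roots T. \<forall>p \<in> nodes T. r \<notin> set (kids T p)) \<and>
     (\<forall>n \<in> nodes T. \<exists>r \<in> roots T. (r, n) \<in> (edges T)\<^sup>*) \<and>
     (\<forall>n \<in> nodes T.
        (app T n = None \<and> kids T n = [] \<and> comp T n \<noteq> None) \<or>
        (app T n \<noteq> None \<and> comp T n = None)) \<and>
     (\<forall>n \<in> nodes T. \<forall>c. comp T n = Some c \<longrightarrow>
        c \<in> nodes T \<and> app T c \<noteq> None \<and> lab T c = lab T n) \<and>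
     (\<forall>n \<in> nodes T. \<forall>th. app T n = Some (Subst th) \<longrightarrow>
        (\<exists>c. kids T n = [c] \<and> lab T n = sapp th (lab T c))) \<and>
     (\<forall>n \<in> nodes T. \<forall>r. app T n = Some (Rule r) \<longrightarrow>
        valid r (map (lab T) (kids T n)) (lab T n))"

definition is_path :: "('q, 'r, 's) ptset \<Rightarrow> nat list \<Rightarrow> bool" where
  "is_path T p \<longleftrightarrow> p \<noteq> [] \<and> set p \<subseteq> nodes T \<and>
     (\<forall>i. Suc i < length p \<longrightarrow>
        p ! Suc i \<in> set (kids T (p ! i)) \<or> comp T (p ! i) = Some (p ! Suc i))"

definition rb_path :: "('q, 'r, 's) ptset \<Rightarrow> nat list \<Rightarrow> bool" where
  "rb_path T p \<longleftrightarrow> is_path T p \<and> 2 \<le> length p \<and> hd p \<in> roots T \<and>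
     is_bud T (last p) \<and> (\<forall>x \<in> set (butlast p). \<not> is_bud T x) \<and>
     (hd p, last p) \<in> (edges T)\<^sup>*"

definition repl :: "nat \<Rightarrow> nat \<Rightarrow> nat list \<Rightarrow> nat list" where
  "repl a b xs = map (\<lambda>x. if x = a then b else x) xs"

definition op1 :: "('q, 'r, 's) ptset \<Rightarrow> ('q, 'r, 's) ptset \<Rightarrow> bool" where
  "op1 T T' \<longleftrightarrow> (\<exists>N P th M.
     N \<in> nodes T \<and> P \<in> nodes T \<and> app T P = Some (Subst th) \<and>
     N \<in> set (kids T P) \<and> kids T N \<noteq> [] \<and> comp T N = None \<and>
     M \<notin> nodes T \<and>
     T' = T\<lparr> nodes := insert M (nodes T), roots := insert N (roots T),
            lab := (lab T)(M := lab T N), app := (app T)(M := None),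
            kids := (kids T)(P := repl N M (kids T P), M := []),
            comp := (comp T)(M := Some N) \<rparr>)"

definition op2 :: "'s \<Rightarrow> ('q, 'r, 's) ptset \<Rightarrow> ('q, 'r, 's) ptset \<Rightarrow> bool" where
  "op2 eps T T' \<longleftrightarrow> (\<exists>C P B D E.
     C \<in> nodes T \<and> C \<notin> roots T \<and> B \<in> nodes T \<and> comp T B = Some C \<and>
     P \<in> nodes T \<and> C \<in> set (kids T P) \<and>
     D \<notin> nodes T \<and> E \<notin> nodes T \<and> D \<noteq> E \<and>
     T' = T\<lparr> nodes := insert D (insert E (nodes T)), roots := insert C (roots T),
            lab := (lab T)(D := lab T C, E := lab T C),
            app := (app T)(D := Some (Subst eps), E := None),
            kids := (kids T)(P := repl C D (kids T P), D := [E], E := []),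
            comp := (comp T)(D := None, E := Some C) \<rparr>)"

definition op3 :: "'s \<Rightarrow> ('q, 'r, 's) ptset \<Rightarrow> ('q, 'r, 's) ptset \<Rightarrow> bool" where
  "op3 eps T T' \<longleftrightarrow> (\<exists>B P r D.
     is_bud T B \<and> P \<in> nodes T \<and> app T P = Some (Rule r) \<and> B \<in> set (kids T P) \<and>
     D \<notin> nodes T \<and>
     T' = T\<lparr> nodes := insert D (nodes T),
            lab := (lab T)(D := lab T B),
            app := (app T)(D := Some (Subst eps)),
            kids := (kids T)(P := repl B D (kids T P), D := [B]),
            comp := (comp T)(D := None) \<rparr>)"

definition norm_step :: "'s \<Rightarrow> ('q, 'r, 's) ptset \<Rightarrow> ('q, 'r, 's) ptset \<Rightarrow> bool" where
  "norm_step eps T T' \<longleftrightarrow> op1 T T' \<or> op2 eps T T' \<or> op3 eps T T'"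

definition normalises :: "'s \<Rightarrow> ('q, 'r, 's) ptset \<Rightarrow> ('q, 'r, 's) ptset \<Rightarrow> bool" where
  "normalises eps T T' \<longleftrightarrow> (norm_step eps)\<^sup>*\<^sup>* T T' \<and> \<not> (\<exists>T''. norm_step eps T' T'')"

end

theory Submission
  imports Defs
begin

text \<open>Each normalisation operation preserves pre-proofs, keeps existing roots and labels, and
  strictly decreases the measure 2 \<times> (non-root companions) + (inner nodes that are premises of a
  (Subst) step) + (buds that are premises of a non-(Subst) rule), so normal forms exist.  In a normal
  form both of the last two sets are empty.  Every node of an rb-path before the bud is an inner
  node, so the IH-node has the bud as a premise of a rule that must be (Subst); any other (Subst)
  premise or (Subst)-node on the path would produce an inner (Subst) premise.\<close>

lemma mem_repl: "x \<in> set (repl a b xs) \<longleftrightarrow> (x = b \<and> a \<in> set xs) \<or> (x \<noteq> a \<and> x \<in> set xs)"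
  unfolding repl_def by auto

lemma set_repl_subset: "set (repl a b xs) \<subseteq> insert b (set xs)"
  unfolding repl_def by auto

lemma distinct_repl: "distinct xs \<Longrightarrow> b \<notin> set xs \<Longrightarrow> distinct (repl a b xs)"
  unfolding repl_def by (induction xs) auto

lemma map_repl: "f b = f a \<Longrightarrow> map f (repl a b xs) = map f xs"
  unfolding repl_def by (induction xs) auto

lemma repl_eq_Nil_iff [simp]: "repl a b xs = [] \<longleftrightarrow> xs = []"
  unfolding repl_def by auto

lemma repl_repl_fresh: "b \<notin> set xs \<Longrightarrow> repl b c (repl a b xs) = repl a c xs"
  unfolding repl_def by (induction xs) auto

lemma mem_edges: "(p, c) \<in> edges T \<longleftrightarrow> p \<in> nodes T \<and> c \<in> set (kids T p)"
  unfolding edges_def by simp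

definition forest :: "('q, 'r, 's) ptset \<Rightarrow> bool" where
  "forest T \<longleftrightarrow>
     finite (nodes T) \<and> roots T \<subseteq> nodes T \<and> roots T \<noteq> {} \<and>
     (\<forall>n \<in> nodes T. set (kids T n) \<subseteq> nodes T \<and> distinct (kids T n)) \<and>
     (\<forall>p1 p2 c. (p1, c) \<in> edges T \<longrightarrow> (p2, c) \<in> edges T \<longrightarrow> p1 = p2) \<and>
     (\<forall>r \<in> roots T. \<forall>p. (p, r) \<notin> edges T) \<and>
     (\<forall>n \<in> nodes T. \<exists>r \<in> roots T. (r, n) \<in> (edges T)\<^sup>*)"

definition correct_node ::
  "('s \<Rightarrow> 'q \<Rightarrow> 'q) \<Rightarrow> ('r \<Rightarrow> 'q list \<Rightarrow> 'q \<Rightarrow> bool) \<Rightarrow> ('q, 'r, 's) ptset \<Rightarrow> nat \<Rightarrow> bool" where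
  "correct_node sapp valid T n \<longleftrightarrow>
     ((app T n = None \<and> kids T n = [] \<and> comp T n \<noteq> None) \<or>
      (app T n \<noteq> None \<and> comp T n = None)) \<and>
     (\<forall>c. comp T n = Some c \<longrightarrow> c \<in> nodes T \<and> app T c \<noteq> None \<and> lab T c = lab T n) \<and>
     (\<forall>th. app T n = Some (Subst th) \<longrightarrow> (\<exists>c. kids T n = [c] \<and> lab T n = sapp th (lab T c))) \<and>
     (\<forall>r. app T n = Some (Rule r) \<longrightarrow> valid r (map (lab T) (kids T n)) (lab T n))"

lemma preproof_iff:
  "preproof sapp valid T \<longleftrightarrow> forest T \<and> (\<forall>n \<in> nodes T. correct_node sapp valid T n)"
  unfolding preproof_def forest_def correct_node_def edges_def by blast

lemma
  assumes "forest T"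
  shows forest_finite: "finite (nodes T)"
    and forest_roots_subset: "roots T \<subseteq> nodes T"
    and forest_roots_nonempty: "roots T \<noteq> {}"
    and forest_kids_subset: "n \<in> nodes T \<Longrightarrow> set (kids T n) \<subseteq> nodes T"
    and forest_distinct_kids: "n \<in> nodes T \<Longrightarrow> distinct (kids T n)"
    and forest_unique_parent: "(p1, c) \<in> edges T \<Longrightarrow> (p2, c) \<in> edges T \<Longrightarrow> p1 = p2"
    and forest_root_parentless: "r \<in> roots T \<Longrightarrow> (p, r) \<notin> edges T"
    and forest_reachable: "n \<in> nodes T \<Longrightarrow> \<exists>r \<in> roots T. (r, n) \<in> (edges T)\<^sup>*"
  using assms unfolding forest_def by blast+

lemma forest_edge_target: "forest T \<Longrightarrow> (p, c) \<in> edges T \<Longrightarrow> c \<in> nodes T"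
  using forest_kids_subset mem_edges by fastforce

lemma
  assumes "correct_node sapp valid T n"
  shows correct_node_bud_or_inner:
      "(app T n = None \<and> kids T n = [] \<and> comp T n \<noteq> None) \<or> (app T n \<noteq> None \<and> comp T n = None)"
    and correct_node_comp: "comp T n = Some c \<Longrightarrow> c \<in> nodes T \<and> app T c \<noteq> None \<and> lab T c = lab T n"
    and correct_node_Subst: "app T n = Some (Subst th) \<Longrightarrow> \<exists>c. kids T n = [c] \<and> lab T n = sapp th (lab T c)"
  using assms unfolding correct_node_def by blast+

text \<open>(O1) is an instance of \<open>detach\<close>, (O3) of \<open>interpose\<close>, and (O2) is \<open>detach\<close> followed
  by \<open>interpose\<close>.\<close>

definition detach :: "('q, 'r, 's) ptset \<Rightarrow> nat \<Rightarrow> nat \<Rightarrow> nat \<Rightarrow> ('q, 'r, 's) ptset" where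
  "detach T P X M = T\<lparr> nodes := insert M (nodes T), roots := insert X (roots T),
     lab := (lab T)(M := lab T X), app := (app T)(M := None),
     kids := (kids T)(P := repl X M (kids T P), M := []),
     comp := (comp T)(M := Some X) \<rparr>"

definition interpose :: "'s \<Rightarrow> ('q, 'r, 's) ptset \<Rightarrow> nat \<Rightarrow> nat \<Rightarrow> nat \<Rightarrow> ('q, 'r, 's) ptset" where
  "interpose eps T P X D = T\<lparr> nodes := insert D (nodes T),
     lab := (lab T)(D := lab T X), app := (app T)(D := Some (Subst eps)),
     kids := (kids T)(P := repl X D (kids T P), D := [X]),
     comp := (comp T)(D := None) \<rparr>"

lemma edges_detach:
  assumes "forest T" "P \<in> nodes T" "X \<in> set (kids T P)" "M \<notin> nodes T"
  shows "edges (detach T P X M) = insert (P, M) (edges T - {(P, X)})"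
proof -
  have "M \<notin> set (kids T n)" if "n \<in> nodes T" for n
    using forest_kids_subset[OF assms(1) that] assms(4) by blast
  moreover have "P \<noteq> M" "X \<noteq> M"
    using assms forest_kids_subset by blast+
  ultimately show ?thesis
    using assms(2-4) unfolding edges_def detach_def by (auto simp: mem_repl split: if_splits)
qed

lemma edges_interpose:
  assumes "forest T" "P \<in> nodes T" "X \<in> set (kids T P)" "D \<notin> nodes T"
  shows "edges (interpose eps T P X D) = insert (P, D) (insert (D, X) (edges T - {(P, X)}))"
proof -
  have "D \<notin> set (kids T n)" if "n \<in> nodes T" for n
    using forest_kids_subset[OF assms(1) that] assms(4) by blast
  moreover have "P \<noteq> D" "X \<noteq> D"
    using assms forest_kids_subset by blast+
  ultimately show ?thesis
    using assms(2-4) unfolding edges_def interpose_def by (auto simp: mem_repl split: if_splits)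
qed

lemma forest_detach:
  assumes F: "forest T" and P: "P \<in> nodes T" and X: "X \<in> set (kids T P)" and M: "M \<notin> nodes T"
  shows "forest (detach T P X M)"
proof -
  let ?T' = "detach T P X M"
  have E: "edges ?T' = insert (P, M) (edges T - {(P, X)})"
    using edges_detach[OF F P X M] .
  have PX: "(P, X) \<in> edges T" using P X by (simp add: mem_edges)
  have Xn: "X \<in> nodes T" using forest_edge_target[OF F PX] .
  have old_target: "c \<in> nodes T" if "(p, c) \<in> edges T" for p c
    using forest_edge_target[OF F that] .
  have reach: "(a, b) \<in> (edges ?T')\<^sup>* \<or> (X, b) \<in> (edges ?T')\<^sup>*" if "(a, b) \<in> (edges T)\<^sup>*" for a b
  proof -
    have "edges T \<subseteq> insert (P, X) (edges ?T')" using E by blast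
    then have "(a, b) \<in> (insert (P, X) (edges ?T'))\<^sup>*" using that rtrancl_mono by blast
    then show ?thesis unfolding rtrancl_insert by blast
  qed
  show ?thesis
    unfolding forest_def
  proof (intro conjI ballI allI impI)
    show "finite (nodes ?T')" using forest_finite[OF F] by (simp add: detach_def)
    show "roots ?T' \<subseteq> nodes ?T'" using forest_roots_subset[OF F] Xn by (auto simp: detach_def)
    show "roots ?T' \<noteq> {}" by (simp add: detach_def)
  next
    fix n assume n: "n \<in> nodes ?T'"
    show "set (kids ?T' n) \<subseteq> nodes ?T'"
    proof (cases "n = M")
      case False
      then have "set (kids ?T' n) \<subseteq> insert M (set (kids T n))" "n \<in> nodes T"
        using n set_repl_subset[of X M "kids T P"] by (auto simp: detach_def)
      then show ?thesis using forest_kids_subset[OF F] by (fastforce simp: detach_def)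
    qed (simp add: detach_def)
    show "distinct (kids ?T' n)"
      using n forest_kids_subset[OF F] forest_distinct_kids[OF F] M P
      by (auto simp: detach_def intro!: distinct_repl)
  next
    fix p1 p2 c assume "(p1, c) \<in> edges ?T'" "(p2, c) \<in> edges ?T'"
    then show "p1 = p2"
      using forest_unique_parent[OF F] old_target M unfolding E by blast
  next
    fix r p assume r: "r \<in> roots ?T'"
    show "(p, r) \<notin> edges ?T'"
    proof
      assume "(p, r) \<in> edges ?T'"
      then have "(p, r) \<in> edges T" "(p, r) \<noteq> (P, X)"
        using r M forest_roots_subset[OF F] Xn unfolding E by (auto simp: detach_def)
      then show False
        using r forest_root_parentless[OF F] forest_unique_parent[OF F _ PX] by (auto simp: detach_def)
    qed
  next
    fix n assume n: "n \<in> nodes ?T'"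
    have roots': "roots ?T' = insert X (roots T)" by (simp add: detach_def)
    obtain r where "r \<in> roots T" and "(r, if n = M then P else n) \<in> (edges T)\<^sup>*"
      using forest_reachable[OF F] n P by (cases "n = M") (auto simp: detach_def)
    then obtain r' where r': "r' \<in> roots ?T'" "(r', if n = M then P else n) \<in> (edges ?T')\<^sup>*"
      using reach roots' by blast
    have "(P, M) \<in> edges ?T'" using E by blast
    then show "\<exists>r \<in> roots ?T'. (r, n) \<in> (edges ?T')\<^sup>*"
      using r' by (cases "n = M") (auto intro: rtrancl_into_rtrancl)
  qed
qed

lemma forest_interpose:
  assumes F: "forest T" and P: "P \<in> nodes T" and X: "X \<in> set (kids T P)" and D: "D \<notin> nodes T"
  shows "forest (interpose eps T P X D)"
proof -
  let ?T' = "interpose eps T P X D"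
  have E: "edges ?T' = insert (P, D) (insert (D, X) (edges T - {(P, X)}))"
    using edges_interpose[OF F P X D] .
  have PX: "(P, X) \<in> edges T" using P X by (simp add: mem_edges)
  have Xn: "X \<in> nodes T" using forest_edge_target[OF F PX] .
  have old_target: "c \<in> nodes T" if "(p, c) \<in> edges T" for p c
    using forest_edge_target[OF F that] .
  have reach: "(edges T)\<^sup>* \<subseteq> (edges ?T')\<^sup>*"
  proof (rule rtrancl_subset_rtrancl)
    have "(P, D) \<in> edges ?T'" "(D, X) \<in> edges ?T'" using E by blast+
    then have "(P, X) \<in> (edges ?T')\<^sup>*" by (meson rtrancl.rtrancl_into_rtrancl r_into_rtrancl)
    then show "edges T \<subseteq> (edges ?T')\<^sup>*" using E by blast
  qed
  show ?thesis
    unfolding forest_def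
  proof (intro conjI ballI allI impI)
    show "finite (nodes ?T')" using forest_finite[OF F] by (simp add: interpose_def)
    show "roots ?T' \<subseteq> nodes ?T'" using forest_roots_subset[OF F] by (auto simp: interpose_def)
    show "roots ?T' \<noteq> {}" using forest_roots_nonempty[OF F] by (simp add: interpose_def)
  next
    fix n assume n: "n \<in> nodes ?T'"
    show "set (kids ?T' n) \<subseteq> nodes ?T'"
    proof (cases "n = D")
      case False
      then have "set (kids ?T' n) \<subseteq> insert D (set (kids T n))" "n \<in> nodes T"
        using n set_repl_subset[of X D "kids T P"] by (auto simp: interpose_def)
      then show ?thesis using forest_kids_subset[OF F] by (fastforce simp: interpose_def)
    qed (simp add: interpose_def Xn)
    show "distinct (kids ?T' n)"
      using n forest_kids_subset[OF F] forest_distinct_kids[OF F] D P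
      by (auto simp: interpose_def intro!: distinct_repl)
  next
    fix p1 p2 c assume "(p1, c) \<in> edges ?T'" "(p2, c) \<in> edges ?T'"
    then show "p1 = p2"
      using forest_unique_parent[OF F] forest_unique_parent[OF F _ PX] old_target D Xn
      unfolding E by auto
  next
    fix r p assume r: "r \<in> roots ?T'"
    then have "r \<in> roots T" by (simp add: interpose_def)
    then show "(p, r) \<notin> edges ?T'"
      using forest_root_parentless[OF F] forest_roots_subset[OF F] PX D unfolding E by blast
  next
    fix n assume n: "n \<in> nodes ?T'"
    obtain r where r: "r \<in> roots ?T'" "(r, if n = D then P else n) \<in> (edges ?T')\<^sup>*"
      using forest_reachable[OF F] n P reach by (cases "n = D") (auto simp: interpose_def)
    have "(P, D) \<in> edges ?T'" using E by blast
    then show "\<exists>r \<in> roots ?T'. (r, n) \<in> (edges ?T')\<^sup>*"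
      using r by (cases "n = D") (auto intro: rtrancl_into_rtrancl)
  qed
qed

lemma correct_node_transfer:
  assumes C: "correct_node sapp valid T n" and n: "n \<in> nodes T" and sub: "nodes T \<subseteq> nodes T'"
    and agree: "\<And>m. m \<in> nodes T \<Longrightarrow> lab T' m = lab T m \<and> app T' m = app T m"
    and comp: "comp T' n = comp T n"
    and prem_labs: "map (lab T') (kids T' n) = map (lab T) (kids T n)"
  shows "correct_node sapp valid T' n"
proof -
  have kids_Nil: "kids T' n = [] \<longleftrightarrow> kids T n = []"
    using prem_labs by (metis map_is_Nil_conv)
  have Subst: "\<exists>c. kids T' n = [c] \<and> lab T' n = sapp th (lab T' c)"
    if Subst_n: "app T' n = Some (Subst th)" for th
  proof -
    obtain c where "kids T n = [c]" "lab T n = sapp th (lab T c)"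
      using correct_node_Subst[OF C] Subst_n agree[OF n] by auto
    then show ?thesis using prem_labs agree[OF n] by (auto simp: map_eq_Cons_conv)
  qed
  have companion: "c \<in> nodes T' \<and> app T' c \<noteq> None \<and> lab T' c = lab T' n"
    if "comp T n = Some c" for c
    using correct_node_comp[OF C that] sub agree[OF n] agree[of c] by auto
  show ?thesis
    using C Subst companion agree[OF n] prem_labs kids_Nil
    unfolding correct_node_def comp by auto
qed

lemma preproof_detach:
  assumes pre: "preproof sapp valid T" and P: "P \<in> nodes T" and X: "X \<in> set (kids T P)"
    and inner: "app T X \<noteq> None" and M: "M \<notin> nodes T"
  shows "preproof sapp valid (detach T P X M)"
proof -
  let ?T' = "detach T P X M"
  have F: "forest T" and C: "\<And>n. n \<in> nodes T \<Longrightarrow> correct_node sapp valid T n"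
    using pre unfolding preproof_iff by blast+
  have Xn: "X \<in> nodes T" using forest_kids_subset[OF F P] X by blast
  have fresh: "M \<notin> set (kids T n)" if "n \<in> nodes T" for n
    using forest_kids_subset[OF F that] M by blast
  have "correct_node sapp valid ?T' n" if n: "n \<in> nodes T" for n
  proof (rule correct_node_transfer[OF C[OF n] n])
    have "map (lab ?T') (kids T m) = map (lab T) (kids T m)" if "m \<in> nodes T" for m
      using fresh[OF that] by (auto simp: detach_def)
    moreover have "map (lab ?T') (repl X M (kids T P)) = map (lab ?T') (kids T P)"
      by (rule map_repl) (simp add: detach_def)
    ultimately show "map (lab ?T') (kids ?T' n) = map (lab T) (kids T n)"
      using n P M by (auto simp: detach_def)
  qed (use n M in \<open>auto simp: detach_def\<close>)
  moreover have "correct_node sapp valid ?T' M"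
    using inner Xn M by (auto simp: correct_node_def detach_def)
  ultimately show ?thesis
    using forest_detach[OF F P X M] unfolding preproof_iff by (simp add: detach_def)
qed

lemma preproof_interpose:
  assumes pre: "preproof sapp valid T" and eps: "\<And>Q. sapp eps Q = Q"
    and P: "P \<in> nodes T" and X: "X \<in> set (kids T P)" and D: "D \<notin> nodes T"
  shows "preproof sapp valid (interpose eps T P X D)"
proof -
  let ?T' = "interpose eps T P X D"
  have F: "forest T" and C: "\<And>n. n \<in> nodes T \<Longrightarrow> correct_node sapp valid T n"
    using pre unfolding preproof_iff by blast+
  have Xn: "X \<in> nodes T" using forest_kids_subset[OF F P] X by blast
  have fresh: "D \<notin> set (kids T n)" if "n \<in> nodes T" for n
    using forest_kids_subset[OF F that] D by blast
  have "correct_node sapp valid ?T' n" if n: "n \<in> nodes T" for n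
  proof (rule correct_node_transfer[OF C[OF n] n])
    have "map (lab ?T') (kids T m) = map (lab T) (kids T m)" if "m \<in> nodes T" for m
      using fresh[OF that] by (auto simp: interpose_def)
    moreover have "map (lab ?T') (repl X D (kids T P)) = map (lab ?T') (kids T P)"
      by (rule map_repl) (simp add: interpose_def)
    ultimately show "map (lab ?T') (kids ?T' n) = map (lab T) (kids T n)"
      using n P D by (auto simp: interpose_def)
  qed (use n D in \<open>auto simp: interpose_def\<close>)
  moreover have "correct_node sapp valid ?T' D"
    using Xn D eps by (auto simp: correct_node_def interpose_def)
  ultimately show ?thesis
    using forest_interpose[OF F P X D] unfolding preproof_iff by (simp add: interpose_def)
qed

definition rule_node :: "('q, 'r, 's) ptset \<Rightarrow> nat \<Rightarrow> bool" where
  "rule_node T n \<longleftrightarrow> n \<in> nodes T \<and> (\<exists>r. app T n = Some (Rule r))"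

definition nonroot_companions :: "('q, 'r, 's) ptset \<Rightarrow> nat set" where
  "nonroot_companions T = {c. \<exists>n \<in> nodes T. comp T n = Some c} - roots T"

definition inner_subst_premises :: "('q, 'r, 's) ptset \<Rightarrow> nat set" where
  "inner_subst_premises T = {n \<in> nodes T. comp T n = None \<and> kids T n \<noteq> [] \<and> subst_premise T n}"

definition rule_premise_buds :: "('q, 'r, 's) ptset \<Rightarrow> nat set" where
  "rule_premise_buds T = {n. is_bud T n \<and> (\<exists>p. (p, n) \<in> edges T \<and> rule_node T p)}"

lemma subst_premise_iff: "subst_premise T n \<longleftrightarrow> (\<exists>p. (p, n) \<in> edges T \<and> subst_node T p)"
  unfolding subst_premise_def subst_node_def mem_edges by blast

lemma
  assumes F: "forest T" and P: "P \<in> nodes T" and X: "X \<in> set (kids T P)" and M: "M \<notin> nodes T"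
  shows nonroot_companions_detach:
      "nonroot_companions (detach T P X M) \<subseteq> nonroot_companions T - {X}"
    and inner_subst_premises_detach:
      "inner_subst_premises (detach T P X M) \<subseteq> inner_subst_premises T - {X}"
    and rule_premise_buds_detach:
      "rule_premise_buds (detach T P X M) \<subseteq>
         (if rule_node T P then insert M (rule_premise_buds T) else rule_premise_buds T)"
proof -
  have E: "edges (detach T P X M) = insert (P, M) (edges T - {(P, X)})"
    using edges_detach[OF F P X M] .
  have PX: "(P, X) \<in> edges T" using P X by (simp add: mem_edges)
  have old: "p \<in> nodes T \<and> c \<in> nodes T" if "(p, c) \<in> edges T" for p c
    using that forest_edge_target[OF F that] by (simp add: mem_edges)
  show "nonroot_companions (detach T P X M) \<subseteq> nonroot_companions T - {X}"
    unfolding nonroot_companions_def by (auto simp: detach_def split: if_splits)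
  show "inner_subst_premises (detach T P X M) \<subseteq> inner_subst_premises T - {X}"
    using forest_unique_parent[OF F _ PX] old M
    unfolding inner_subst_premises_def subst_premise_iff E subst_node_def
    by (auto simp: detach_def split: if_splits)
  show "rule_premise_buds (detach T P X M) \<subseteq>
         (if rule_node T P then insert M (rule_premise_buds T) else rule_premise_buds T)"
    using old M
    unfolding rule_premise_buds_def E is_bud_def rule_node_def
    by (auto simp: detach_def split: if_splits)
qed

lemma
  assumes F: "forest T" and P: "P \<in> nodes T" and X: "X \<in> set (kids T P)" and D: "D \<notin> nodes T"
    and bud: "is_bud T X"
  shows nonroot_companions_interpose:
      "nonroot_companions (interpose eps T P X D) = nonroot_companions T"
    and inner_subst_premises_interpose:
      "inner_subst_premises (interpose eps T P X D) \<subseteq>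
         (if subst_node T P then insert D (inner_subst_premises T) else inner_subst_premises T)"
    and rule_premise_buds_interpose:
      "rule_premise_buds (interpose eps T P X D) \<subseteq> rule_premise_buds T - {X}"
proof -
  let ?T' = "interpose eps T P X D"
  have E: "edges ?T' = insert (P, D) (insert (D, X) (edges T - {(P, X)}))"
    using edges_interpose[OF F P X D] .
  have PX: "(P, X) \<in> edges T" using P X by (simp add: mem_edges)
  have old: "p \<in> nodes T \<and> c \<in> nodes T" if "(p, c) \<in> edges T" for p c
    using that forest_edge_target[OF F that] by (simp add: mem_edges)
  have agree: "app ?T' m = app T m \<and> comp ?T' m = comp T m \<and> (kids ?T' m = [] \<longleftrightarrow> kids T m = [])"
    if "m \<in> nodes T" for m
    using that D by (auto simp: interpose_def)
  show "nonroot_companions ?T' = nonroot_companions T"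
    using D unfolding nonroot_companions_def by (auto simp: interpose_def)
  show "inner_subst_premises ?T' \<subseteq>
         (if subst_node T P then insert D (inner_subst_premises T) else inner_subst_premises T)"
  proof
    fix n assume "n \<in> inner_subst_premises ?T'"
    then obtain p where pn: "(p, n) \<in> edges ?T'" and p: "subst_node ?T' p"
      and n: "comp ?T' n = None" "kids ?T' n \<noteq> []"
      unfolding inner_subst_premises_def subst_premise_iff by blast
    consider "p = P" "n = D" | "n = X" | "(p, n) \<in> edges T" "n \<noteq> D" "p \<noteq> D"
      using pn D old unfolding E by blast
    then show "n \<in> (if subst_node T P then insert D (inner_subst_premises T) else inner_subst_premises T)"
    proof cases
      case 1
      then show ?thesis using p P agree[OF P] by (simp add: subst_node_def)
    next
      case 2
      then show ?thesis using n bud agree[of X] by (auto simp: is_bud_def)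
    next
      case 3
      then have "n \<in> inner_subst_premises T"
        using p n old[OF 3(1)] agree[of p] agree[of n]
        unfolding inner_subst_premises_def subst_premise_iff subst_node_def by auto
      then show ?thesis by simp
    qed
  qed
  show "rule_premise_buds ?T' \<subseteq> rule_premise_buds T - {X}"
  proof
    fix n assume "n \<in> rule_premise_buds ?T'"
    then obtain p where pn: "(p, n) \<in> edges ?T'" and p: "rule_node ?T' p" and n: "is_bud ?T' n"
      unfolding rule_premise_buds_def by blast
    have "p \<noteq> D" using p by (auto simp: rule_node_def interpose_def)
    moreover have "n \<noteq> D" using n by (auto simp: is_bud_def interpose_def)
    ultimately have "(p, n) \<in> edges T" "n \<noteq> X"
      using pn forest_unique_parent[OF F _ PX] unfolding E by auto
    then show "n \<in> rule_premise_buds T - {X}"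
      using p n old agree unfolding rule_premise_buds_def rule_node_def is_bud_def by auto
  qed
qed

text \<open>The weight 2 is needed because (O2) removes a non-root companion but may turn its new
  (Subst) node into an inner (Subst) premise.\<close>

definition norm_measure :: "('q, 'r, 's) ptset \<Rightarrow> nat" where
  "norm_measure T =
     2 * card (nonroot_companions T) + card (inner_subst_premises T) + card (rule_premise_buds T)"

lemma
  assumes "preproof sapp valid T"
  shows finite_nonroot_companions: "finite (nonroot_companions T)"
    and finite_inner_subst_premises: "finite (inner_subst_premises T)"
    and finite_rule_premise_buds: "finite (rule_premise_buds T)"
proof -
  have F: "forest T" and C: "\<And>n. n \<in> nodes T \<Longrightarrow> correct_node sapp valid T n"
    using assms unfolding preproof_iff by blast+
  have "nonroot_companions T \<subseteq> nodes T"
    using correct_node_comp[OF C] unfolding nonroot_companions_def by blast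
  moreover have "inner_subst_premises T \<subseteq> nodes T" "rule_premise_buds T \<subseteq> nodes T"
    unfolding inner_subst_premises_def rule_premise_buds_def is_bud_def by blast+
  ultimately show "finite (nonroot_companions T)" "finite (inner_subst_premises T)"
    "finite (rule_premise_buds T)"
    using forest_finite[OF F] finite_subset by blast+
qed

lemma card_le_Suc_if_subset_insert:
  assumes "B \<subseteq> insert x A" and "finite A"
  shows "card B \<le> card A + 1"
proof -
  have "card B \<le> card (insert x A)" using assms by (simp add: card_mono)
  also have "\<dots> \<le> card A + 1" using assms(2) by (simp add: card_insert_if)
  finally show ?thesis .
qed

lemma op1_invariant:
  assumes pre: "preproof sapp valid T" and step: "op1 T T'"
  shows "preproof sapp valid T' \<and> norm_measure T' < norm_measure T"
proof -
  obtain N P th M where N: "N \<in> nodes T" and P: "P \<in> nodes T" and PSubst: "app T P = Some (Subst th)"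
    and NP: "N \<in> set (kids T P)" and inner: "kids T N \<noteq> []" "comp T N = None"
    and M: "M \<notin> nodes T" and T': "T' = detach T P N M"
    using step unfolding op1_def detach_def by blast
  have F: "forest T" and C: "correct_node sapp valid T N"
    using pre N unfolding preproof_iff by blast+
  have "app T N \<noteq> None" using correct_node_bud_or_inner[OF C] inner by blast
  then have pre': "preproof sapp valid T'" using preproof_detach[OF pre P NP _ M] T' by blast
  have "card (nonroot_companions T') \<le> card (nonroot_companions T)"
    using nonroot_companions_detach[OF F P NP M] finite_nonroot_companions[OF pre] T'
    by (auto intro!: card_mono)
  moreover have "card (inner_subst_premises T') < card (inner_subst_premises T)"
  proof (rule psubset_card_mono)
    have "N \<in> inner_subst_premises T"
      using N P PSubst NP inner unfolding inner_subst_premises_def subst_premise_def by blast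
    then show "inner_subst_premises T' \<subset> inner_subst_premises T"
      using inner_subst_premises_detach[OF F P NP M] T' by blast
  qed (rule finite_inner_subst_premises[OF pre])
  moreover have "card (rule_premise_buds T') \<le> card (rule_premise_buds T)"
  proof -
    have "\<not> rule_node T P" using PSubst by (simp add: rule_node_def)
    then show ?thesis
      using rule_premise_buds_detach[OF F P NP M] finite_rule_premise_buds[OF pre] T'
      by (auto intro!: card_mono)
  qed
  ultimately show ?thesis using pre' unfolding norm_measure_def by linarith
qed

lemma op3_invariant:
  assumes pre: "preproof sapp valid T" and eps: "\<And>Q. sapp eps Q = Q" and step: "op3 eps T T'"
  shows "preproof sapp valid T' \<and> norm_measure T' < norm_measure T"
proof -
  obtain B P r D where B: "is_bud T B" and P: "P \<in> nodes T" and PRule: "app T P = Some (Rule r)"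
    and BP: "B \<in> set (kids T P)" and D: "D \<notin> nodes T" and T': "T' = interpose eps T P B D"
    using step unfolding op3_def interpose_def by blast
  have F: "forest T" using pre unfolding preproof_iff by blast
  have pre': "preproof sapp valid T'" using preproof_interpose[OF pre eps P BP D] T' by simp
  have "\<not> subst_node T P" using PRule by (simp add: subst_node_def)
  then have "card (inner_subst_premises T') \<le> card (inner_subst_premises T)"
    using inner_subst_premises_interpose[OF F P BP D B] T' finite_inner_subst_premises[OF pre]
    by (simp add: card_mono)
  moreover have "card (nonroot_companions T') = card (nonroot_companions T)"
    using nonroot_companions_interpose[OF F P BP D B] T' by simp
  moreover have "card (rule_premise_buds T') < card (rule_premise_buds T)"
  proof (rule psubset_card_mono)
    have "B \<in> rule_premise_buds T"
      using B P PRule BP unfolding rule_premise_buds_def rule_node_def mem_edges by blast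
    then show "rule_premise_buds T' \<subset> rule_premise_buds T"
      using rule_premise_buds_interpose[OF F P BP D B] T' by blast
  qed (rule finite_rule_premise_buds[OF pre])
  ultimately show ?thesis using pre' unfolding norm_measure_def by linarith
qed

lemma op2_eq_interpose_detach:
  assumes "E \<notin> set (kids T P)" "E \<noteq> P" "D \<noteq> E"
  shows "T\<lparr> nodes := insert D (insert E (nodes T)), roots := insert C (roots T),
            lab := (lab T)(D := lab T C, E := lab T C),
            app := (app T)(D := Some (Subst eps), E := None),
            kids := (kids T)(P := repl C D (kids T P), D := [E], E := []),
            comp := (comp T)(D := None, E := Some C) \<rparr>
         = interpose eps (detach T P C E) P E D"
  using assms by (simp add: detach_def interpose_def repl_repl_fresh fun_upd_twist)

lemma op2_invariant:
  assumes pre: "preproof sapp valid T" and eps: "\<And>Q. sapp eps Q = Q" and step: "op2 eps T T'"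
  shows "preproof sapp valid T' \<and> norm_measure T' < norm_measure T"
proof -
  obtain C P B D E where C: "C \<notin> roots T" and B: "B \<in> nodes T" "comp T B = Some C"
    and P: "P \<in> nodes T" and CP: "C \<in> set (kids T P)" and D: "D \<notin> nodes T" and E: "E \<notin> nodes T"
    and DE: "D \<noteq> E"
    and T': "T' = T\<lparr> nodes := insert D (insert E (nodes T)), roots := insert C (roots T),
            lab := (lab T)(D := lab T C, E := lab T C),
            app := (app T)(D := Some (Subst eps), E := None),
            kids := (kids T)(P := repl C D (kids T P), D := [E], E := []),
            comp := (comp T)(D := None, E := Some C) \<rparr>"
    using step unfolding op2_def by blast
  define T1 where "T1 = detach T P C E"
  have F: "forest T" and CB: "correct_node sapp valid T B"
    using pre B unfolding preproof_iff by blast+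
  have "E \<notin> set (kids T P)" using forest_kids_subset[OF F P] E by blast
  then have T'_eq: "T' = interpose eps T1 P E D"
    using T' op2_eq_interpose_detach[of E T P D C eps] P E DE T1_def by blast
  have inner: "app T C \<noteq> None" using correct_node_comp[OF CB B(2)] by blast
  have pre1: "preproof sapp valid T1" using preproof_detach[OF pre P CP inner E] T1_def by simp
  have F1: "forest T1" using pre1 unfolding preproof_iff by blast
  have P1: "P \<in> nodes T1" and EP1: "E \<in> set (kids T1 P)" and D1: "D \<notin> nodes T1"
    and E1: "is_bud T1 E"
    using P CP D E DE by (auto simp: T1_def detach_def mem_repl is_bud_def)
  have pre': "preproof sapp valid T'"
    using preproof_interpose[OF pre1 eps P1 EP1 D1] T'_eq by simp
  have "C \<in> nonroot_companions T" using B C unfolding nonroot_companions_def by blast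
  then have "nonroot_companions T' \<subset> nonroot_companions T"
    using nonroot_companions_interpose[OF F1 P1 EP1 D1 E1, where eps = eps]
      nonroot_companions_detach[OF F P CP E]
    unfolding T'_eq T1_def by blast
  then have "card (nonroot_companions T') < card (nonroot_companions T)"
    using finite_nonroot_companions[OF pre] by (rule psubset_card_mono[rotated])
  moreover have "inner_subst_premises T' \<subseteq> insert D (inner_subst_premises T)"
  proof -
    have "inner_subst_premises T' \<subseteq> insert D (inner_subst_premises T1)"
      using inner_subst_premises_interpose[OF F1 P1 EP1 D1 E1, where eps = eps] T'_eq
      by (cases "subst_node T1 P") auto
    then show ?thesis using inner_subst_premises_detach[OF F P CP E] T1_def by blast
  qed
  then have "card (inner_subst_premises T') \<le> card (inner_subst_premises T) + 1"
    using finite_inner_subst_premises[OF pre] by (rule card_le_Suc_if_subset_insert)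
  moreover have "rule_premise_buds T' \<subseteq> rule_premise_buds T"
  proof -
    have "rule_premise_buds T1 \<subseteq> insert E (rule_premise_buds T)"
      using rule_premise_buds_detach[OF F P CP E] T1_def by (cases "rule_node T P") auto
    then show ?thesis
      using rule_premise_buds_interpose[OF F1 P1 EP1 D1 E1, where eps = eps] T'_eq by blast
  qed
  then have "card (rule_premise_buds T') \<le> card (rule_premise_buds T)"
    using finite_rule_premise_buds[OF pre] by (rule card_mono[rotated])
  ultimately show ?thesis using pre' unfolding norm_measure_def by linarith
qed

lemma norm_step_invariant:
  assumes "preproof sapp valid T" "\<And>Q. sapp eps Q = Q" "norm_step eps T T'"
  shows "preproof sapp valid T' \<and> norm_measure T' < norm_measure T"
  using assms(3) op1_invariant[OF assms(1)] op2_invariant[OF assms(1,2)] op3_invariant[OF assms(1,2)]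
  unfolding norm_step_def by blast

lemma norm_step_extends:
  assumes "norm_step eps T T'"
  shows "nodes T \<subseteq> nodes T' \<and> roots T \<subseteq> roots T' \<and> (\<forall>n \<in> nodes T. lab T' n = lab T n)"
  using assms unfolding norm_step_def op1_def op2_def op3_def by auto

lemma normalisation_invariant:
  assumes "(norm_step eps)\<^sup>*\<^sup>* T T'" and "preproof sapp valid T" and eps: "\<And>Q. sapp eps Q = Q"
  shows "preproof sapp valid T' \<and> nodes T \<subseteq> nodes T' \<and> roots T \<subseteq> roots T' \<and>
    (\<forall>n \<in> nodes T. lab T' n = lab T n)"
  using assms(1)
proof (induction rule: rtranclp_induct)
  case (step T1 T2)
  then have "preproof sapp valid T2" using norm_step_invariant[of sapp valid T1 eps T2] eps by blast
  then show ?case using step norm_step_extends[OF step(2)] by auto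
qed (use assms(2) in simp)

lemma normalises_exists:
  assumes "preproof sapp valid T" and eps: "\<And>Q. sapp eps Q = Q"
  shows "\<exists>T'. normalises eps T T'"
  using assms(1)
proof (induction "norm_measure T" arbitrary: T rule: less_induct)
  case less
  show ?case
  proof (cases "\<exists>T1. norm_step eps T T1")
    case True
    then obtain T1 where step: "norm_step eps T T1" by blast
    then obtain T' where "normalises eps T1 T'"
      using less norm_step_invariant[of sapp valid T eps T1] eps by blast
    then show ?thesis using step unfolding normalises_def by (meson converse_rtranclp_into_rtranclp)
  qed (auto simp: normalises_def)
qed

lemma normal_form_no_inner_subst_premises:
  assumes "finite (nodes T)" and nf: "\<nexists>T'. norm_step eps T T'"
  shows "inner_subst_premises T = {}"
proof (rule ccontr)
  assume "inner_subst_premises T \<noteq> {}"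
  then obtain N P th where N: "N \<in> nodes T" "comp T N = None" "kids T N \<noteq> []"
    and P: "P \<in> nodes T" "app T P = Some (Subst th)" "N \<in> set (kids T P)"
    unfolding inner_subst_premises_def subst_premise_def by blast
  obtain M where M: "M \<notin> nodes T" using ex_new_if_finite[OF infinite_UNIV_nat assms(1)] by blast
  have "op1 T (detach T P N M)"
    unfolding op1_def detach_def
    by (rule exI[of _ N], rule exI[of _ P], rule exI[of _ th], rule exI[of _ M]) (simp add: N P M)
  then show False using nf unfolding norm_step_def by blast
qed

lemma normal_form_no_rule_premise_buds:
  assumes "finite (nodes T)" and nf: "\<nexists>T'. norm_step eps T T'"
  shows "rule_premise_buds T = {}"
proof (rule ccontr)
  assume "rule_premise_buds T \<noteq> {}"
  then obtain B P r where B: "is_bud T B" "B \<in> set (kids T P)"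
    and P: "P \<in> nodes T" "app T P = Some (Rule r)"
    unfolding rule_premise_buds_def rule_node_def mem_edges by blast
  obtain D where D: "D \<notin> nodes T" using ex_new_if_finite[OF infinite_UNIV_nat assms(1)] by blast
  have "op3 eps T (interpose eps T P B D)"
    unfolding op3_def interpose_def
    by (rule exI[of _ B], rule exI[of _ P], rule exI[of _ r], rule exI[of _ D]) (simp add: B P D)
  then show False using nf unfolding norm_step_def by blast
qed

lemma rb_path_inner_step:
  assumes rb: "rb_path T p" and i: "Suc i < length p"
  shows "(p ! i, p ! Suc i) \<in> edges T" and "comp T (p ! i) = None"
proof -
  have "p ! i \<in> set (butlast p)" using i by (simp add: nth_butlast[symmetric])
  then have "\<not> is_bud T (p ! i)" and "p ! i \<in> nodes T"
    using rb i unfolding rb_path_def is_path_def by (auto dest: in_set_butlastD)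
  then show "comp T (p ! i) = None" by (simp add: is_bud_def)
  then show "(p ! i, p ! Suc i) \<in> edges T"
    using rb i \<open>p ! i \<in> nodes T\<close> unfolding rb_path_def is_path_def by (auto simp: mem_edges)
qed

lemma rb_path_subst_premise_inner:
  assumes rb: "rb_path T p" and i: "Suc i < length p" and sp: "subst_premise T (p ! i)"
  shows "p ! i \<in> inner_subst_premises T"
  using rb_path_inner_step[OF rb i] sp unfolding inner_subst_premises_def by (auto simp: mem_edges)

lemma rb_path_IH_edge:
  assumes rb: "rb_path T p"
  shows "(p ! (length p - 2), last p) \<in> edges T"
proof -
  have len: "Suc (length p - 2) = length p - 1" "Suc (length p - 2) < length p"
    using rb unfolding rb_path_def by auto
  have "last p = p ! (length p - 1)"
    using rb unfolding rb_path_def is_path_def by (simp add: last_conv_nth)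
  then show ?thesis using rb_path_inner_step(1)[OF rb len(2)] len(1) by simp
qed

lemma rb_path_IH_node_subst:
  assumes pre: "preproof sapp valid T" and rb: "rb_path T p" and no_buds: "rule_premise_buds T = {}"
  shows "subst_node T (p ! (length p - 2))"
proof -
  let ?H = "p ! (length p - 2)"
  have HB: "(?H, last p) \<in> edges T" using rb_path_IH_edge[OF rb] .
  have H: "?H \<in> nodes T" using HB by (simp add: mem_edges)
  have "app T ?H \<noteq> None"
    using correct_node_bud_or_inner[of sapp valid T ?H] pre H HB unfolding preproof_iff
    by (auto simp: mem_edges)
  moreover have "\<not> rule_node T ?H"
    using HB no_buds rb unfolding rule_premise_buds_def rb_path_def by blast
  ultimately show ?thesis using H
    unfolding rule_node_def subst_node_def by (metis option.exhaust rstep.exhaust)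
qed

lemma rb_path_normal:
  assumes pre: "preproof sapp valid T" and rb: "rb_path T p"
    and no_premises: "inner_subst_premises T = {}" and no_buds: "rule_premise_buds T = {}"
  shows "(\<forall>x \<in> set p. subst_premise T x \<longleftrightarrow> x = last p) \<and>
         (\<forall>x \<in> set p. subst_node T x \<longleftrightarrow> x = p ! (length p - 2))"
proof (intro conjI ballI)
  let ?n = "length p" and ?H = "p ! (length p - 2)"
  have last: "last p = p ! (?n - 1)"
    using rb unfolding rb_path_def is_path_def by (simp add: last_conv_nth)
  have H: "subst_node T ?H" using rb_path_IH_node_subst[OF pre rb no_buds] .
  have HB: "(?H, last p) \<in> edges T" using rb_path_IH_edge[OF rb] .
  fix x assume "x \<in> set p"
  then obtain i where i: "i < ?n" "x = p ! i" by (auto simp: in_set_conv_nth)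
  show "subst_premise T x \<longleftrightarrow> x = last p"
  proof
    assume "subst_premise T x"
    then have "\<not> Suc i < ?n" using rb_path_subst_premise_inner[OF rb] no_premises i by blast
    then have "i = ?n - 1" using i(1) by linarith
    then show "x = last p" using i last by simp
  next
    show "x = last p \<Longrightarrow> subst_premise T x" using H HB by (auto simp: subst_premise_iff)
  qed
  show "subst_node T x \<longleftrightarrow> x = ?H"
  proof
    assume x: "subst_node T x"
    have "i \<noteq> ?n - 1"
    proof
      assume "i = ?n - 1"
      then have "is_bud T x" using rb i last unfolding rb_path_def by simp
      then show False
        using x pre correct_node_bud_or_inner[of sapp valid T x]
        unfolding preproof_iff is_bud_def subst_node_def by auto
    qed
    moreover have "\<not> Suc (Suc i) < ?n"
    proof
      assume i2: "Suc (Suc i) < ?n"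
      then have "subst_premise T (p ! Suc i)"
        using rb_path_inner_step(1)[OF rb, of i] x i by (auto simp: subst_premise_iff)
      then show False using rb_path_subst_premise_inner[OF rb i2] no_premises by blast
    qed
    ultimately have "i = ?n - 2" using i(1) by linarith
    then show "x = ?H" using i by simp
  qed (use H i in simp)
qed

theorem mainTheorem3:
  fixes sapp :: "'s \<Rightarrow> 'q \<Rightarrow> 'q"
    and valid :: "'r \<Rightarrow> 'q list \<Rightarrow> 'q \<Rightarrow> bool"
    and eps :: 's
    and T :: "('q, 'r, 's) ptset"
    and R :: nat and S :: 'q
  assumes empty_subst: "\<And>X. sapp eps X = X"
    and pre: "preproof sapp valid T"
    and single_tree: "roots T = {R}"
    and root_lab: "lab T R = S"
  shows "(\<exists>T'. normalises eps T T') \<and>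
         (\<forall>T'. normalises eps T T' \<longrightarrow>
            preproof sapp valid T' \<and>
            (\<exists>R' \<in> roots T'. lab T' R' = S) \<and>
            (\<forall>p. rb_path T' p \<longrightarrow>
               (\<forall>x \<in> set p. subst_premise T' x \<longleftrightarrow> x = last p) \<and>
               (\<forall>x \<in> set p. subst_node T' x \<longleftrightarrow> x = p ! (length p - 2))))"
proof (intro conjI allI impI)
  show "\<exists>T'. normalises eps T T'" using normalises_exists[OF pre empty_subst] .
next
  fix T' assume "normalises eps T T'"
  then have steps: "(norm_step eps)\<^sup>*\<^sup>* T T'" and nf: "\<nexists>T''. norm_step eps T' T''"
    unfolding normalises_def by auto
  have pre': "preproof sapp valid T'" and roots: "roots T \<subseteq> roots T'"
    and labs: "\<forall>n \<in> nodes T. lab T' n = lab T n"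
    using normalisation_invariant[OF steps pre empty_subst] by auto
  show "preproof sapp valid T'" by (rule pre')
  have "R \<in> nodes T" using pre single_tree forest_roots_subset unfolding preproof_iff by blast
  then show "\<exists>R' \<in> roots T'. lab T' R' = S" using roots labs single_tree root_lab by auto
  have fin: "finite (nodes T')" using pre' forest_finite unfolding preproof_iff by blast
  fix p assume "rb_path T' p"
  then show "\<forall>x \<in> set p. subst_premise T' x \<longleftrightarrow> x = last p"
    and "\<forall>x \<in> set p. subst_node T' x \<longleftrightarrow> x = p ! (length p - 2)"
    using rb_path_normal[OF pre' _ normal_form_no_inner_subst_premises[OF fin nf]
        normal_form_no_rule_premise_buds[OF fin nf]] by blast+
qed

end
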